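(* Let $A\subset\mathbb R^\tau$ be a compact max-min convex set and let $\xi\colon J(A)\to\mathbb R^\tau$ be defined by $\xi(\mu)=(\mu(p_\alpha))_{\alpha<\tau}$, where $p_\alpha\colon A\to\mathbb R$ is the $\alpha$-th coordinate projection. Then $\xi(J(A))\subset A$.
   Context: A max-min measure on a compact Hausdorff space $X$ is a functional $\mu\colon C(X)\to\mathbb R$ (not assumed continuous) with $\mu(c_X)=c$ for constants, $\mu(\varphi\vee\psi)=\mu(\varphi)\vee\mu(\psi)$, $\mu(c\wedge\varphi)=c\wedge\mu(\varphi)$ for $c\in\mathbb R$; $J(X)$ is the set of max-min measures with the topology of pointwise convergence on $C(X)$. $\mathbb R^\tau$ carries the product topology. A subset $A\subset\mathbb R^\tau$ is max-min convex if $x\vee(\lambda\wedge y)\in A$ for all $x,y\in A$, $\lambda\in\mathbb R$ (coordinatewise operations). *)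

theory Defs
  imports "HOL-Analysis.Analysis"
begin

text \<open>Points of R^tau are functions 'i \<Rightarrow> real (index type 'i plays the role of tau);
  the type 'i \<Rightarrow> real carries the product topology (Function_Topology).
  C(A) is represented by continuous functions on A, normalised to 0 outside A.\<close>

definition rst :: "('a \<Rightarrow> bool) \<Rightarrow> ('a \<Rightarrow> real) \<Rightarrow> 'a \<Rightarrow> real" where
  "rst P f = (\<lambda>x. if P x then f x else 0)"

definition cfun :: "('i \<Rightarrow> real) set \<Rightarrow> (('i \<Rightarrow> real) \<Rightarrow> real) set" where
  "cfun A = {f. continuous_on A f \<and> (\<forall>x. x \<notin> A \<longrightarrow> f x = 0)}"

definition maxmin_measure :: "('i \<Rightarrow> real) set \<Rightarrow> ((('i \<Rightarrow> real) \<Rightarrow> real) \<Rightarrow> real) \<Rightarrow> bool" where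
  "maxmin_measure A \<mu> \<longleftrightarrow>
     (\<forall>c. \<mu> (rst (\<lambda>x. x \<in> A) (\<lambda>_. c)) = c) \<and>
     (\<forall>\<phi>\<in>cfun A. \<forall>\<psi>\<in>cfun A. \<mu> (rst (\<lambda>x. x \<in> A) (\<lambda>x. max (\<phi> x) (\<psi> x))) = max (\<mu> \<phi>) (\<mu> \<psi>)) \<and>
     (\<forall>c. \<forall>\<phi>\<in>cfun A. \<mu> (rst (\<lambda>x. x \<in> A) (\<lambda>x. min c (\<phi> x))) = min c (\<mu> \<phi>))"

definition J :: "('i \<Rightarrow> real) set \<Rightarrow> ((('i \<Rightarrow> real) \<Rightarrow> real) \<Rightarrow> real) set" where
  "J A = {\<mu>. maxmin_measure A \<mu>}"

definition maxmin_convex :: "('i \<Rightarrow> real) set \<Rightarrow> bool" where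
  "maxmin_convex A \<longleftrightarrow> (\<forall>x\<in>A. \<forall>y\<in>A. \<forall>l::real. (\<lambda>i. max (x i) (min l (y i))) \<in> A)"

definition xi :: "('i \<Rightarrow> real) set \<Rightarrow> ((('i \<Rightarrow> real) \<Rightarrow> real) \<Rightarrow> real) \<Rightarrow> 'i \<Rightarrow> real" where
  "xi A \<mu> = (\<lambda>\<alpha>. \<mu> (rst (\<lambda>x. x \<in> A) (\<lambda>x. x \<alpha>)))"

end

theory Submission
  imports Defs
begin

text \<open>Since \<open>A\<close> is compact, it suffices to approximate \<open>\<xi>(\<mu>)\<close> to within \<open>\<epsilon>\<close> on every finite
  set \<open>F\<close> of coordinates by points of \<open>A\<close>. For a single coordinate \<open>\<beta>\<close>, comparing \<open>\<mu>(p\<^sub>\<beta>)\<close> with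
  \<open>\<mu>\<close> of a maximum of piecewise linear cut-offs of the other projections yields \<open>a \<in> A\<close> with
  \<open>a\<^sub>\<beta> \<ge> \<xi>\<^sub>\<beta> - \<epsilon>\<close> and \<open>a\<^sub>\<gamma> \<le> \<xi>\<^sub>\<gamma> + \<epsilon>\<close> wherever \<open>\<xi>\<^sub>\<gamma> < \<xi>\<^sub>\<beta>\<close>; max-min convexity glues these
  points into one that is \<open>\<epsilon>\<close>-close to \<open>\<xi>(\<mu>)\<close> on all of \<open>F\<close>.\<close>

abbreviation restr :: "('i \<Rightarrow> real) set \<Rightarrow> (('i \<Rightarrow> real) \<Rightarrow> real) \<Rightarrow> ('i \<Rightarrow> real) \<Rightarrow> real" where
  "restr A f \<equiv> rst (\<lambda>x. x \<in> A) f"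

lemma continuous_on_coordinate [continuous_intros]:
  "continuous_on S (\<lambda>x::'i \<Rightarrow> 'a::topological_space. x i)"
  by (rule continuous_on_subset[OF continuous_on_product_coordinates subset_UNIV])

lemma restr_in_cfun: "continuous_on A f \<Longrightarrow> restr A f \<in> cfun A"
  unfolding cfun_def by (auto simp: rst_def elim: continuous_on_eq)

lemma Max_insert_image_insert:
  assumes "finite G"
  shows "Max (insert c (f ` insert a G)) = max (f a) (Max (insert c (f ` G)))"
proof -
  have "insert c (f ` insert a G) = insert (f a) (insert c (f ` G))"
    by auto
  then show ?thesis
    using assms by simp
qed

lemma continuous_on_Max_insert:
  fixes c :: "'b::linorder_topology"
  assumes "finite G" "\<And>g. g \<in> G \<Longrightarrow> continuous_on S (f g)"
  shows "continuous_on S (\<lambda>x. Max (insert c ((\<lambda>g. f g x) ` G)))"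
  using assms
proof (induction G rule: finite_induct)
  case (insert a G)
  then show ?case
    by (simp only: Max_insert_image_insert) (auto intro: continuous_on_max)
qed simp

lemma mem_compact_if_coordinatewise_approx:
  fixes A :: "('i \<Rightarrow> 'a::metric_space) set"
  assumes "compact A"
    and approx: "\<And>F \<epsilon>. finite F \<Longrightarrow> \<epsilon> > 0 \<Longrightarrow> \<exists>b\<in>A. \<forall>\<gamma>\<in>F. dist (b \<gamma>) (y \<gamma>) \<le> \<epsilon>"
  shows "y \<in> A"
proof -
  define S where "S = (\<lambda>(\<gamma>, \<epsilon>). {a. dist (a \<gamma>) (y \<gamma>) \<le> \<epsilon>})"
  have "A \<inter> (\<Inter>i\<in>UNIV \<times> {0::real<..}. S i) \<noteq> {}"
  proof (rule compact_imp_fip_image[OF \<open>compact A\<close>])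
    show "closed (S i)" for i
      unfolding S_def by (cases i) (simp, intro closed_Collect_le continuous_intros)
  next
    fix I :: "('i \<times> real) set" assume I: "finite I" "I \<subseteq> UNIV \<times> {0::real<..}"
    define \<epsilon> where "\<epsilon> = Min (insert 1 (snd ` I))"
    have "\<epsilon> > 0"
      using I unfolding \<epsilon>_def by auto
    then obtain b where "b \<in> A" "\<forall>\<gamma>\<in>fst ` I. dist (b \<gamma>) (y \<gamma>) \<le> \<epsilon>"
      using approx I(1) by blast
    moreover have "\<epsilon> \<le> snd i" if "i \<in> I" for i
      using I(1) that unfolding \<epsilon>_def by simp
    ultimately have "b \<in> A \<inter> (\<Inter>i\<in>I. S i)"
      unfolding S_def by (force split: prod.splits)
    then show "A \<inter> (\<Inter>i\<in>I. S i) \<noteq> {}" by blast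
  qed
  then obtain a where "a \<in> A" and "\<And>\<gamma> \<epsilon>. \<epsilon> > 0 \<Longrightarrow> dist (a \<gamma>) (y \<gamma>) \<le> \<epsilon>"
    unfolding S_def by fastforce
  then have "a = y"
    by (metis dense_ge dist_le_zero_iff ext)
  with \<open>a \<in> A\<close> show ?thesis by simp
qed

lemma maxmin_convex_approx:
  fixes A :: "('i \<Rightarrow> real) set"
  assumes "maxmin_convex A" "finite F" "\<epsilon> \<ge> 0"
    and upper: "\<exists>a\<in>A. \<forall>\<gamma>\<in>F. a \<gamma> \<le> m \<gamma> + \<epsilon>"
    and lower: "\<And>\<beta>. \<beta> \<in> F \<Longrightarrow> \<exists>a\<in>A. a \<beta> \<ge> m \<beta> - \<epsilon> \<and> (\<forall>\<gamma>\<in>F. m \<gamma> < m \<beta> \<longrightarrow> a \<gamma> \<le> m \<gamma> + \<epsilon>)"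
  shows "\<exists>b\<in>A. \<forall>\<gamma>\<in>F. \<bar>b \<gamma> - m \<gamma>\<bar> \<le> \<epsilon>"
proof -
  have "\<exists>b\<in>A. (\<forall>\<gamma>\<in>F. b \<gamma> \<le> m \<gamma> + \<epsilon>) \<and> (\<forall>\<beta>\<in>F'. b \<beta> \<ge> m \<beta> - \<epsilon>)" if "F' \<subseteq> F" for F'
    using finite_subset[OF that \<open>finite F\<close>] that
  proof (induction F' rule: finite_subset_induct)
    case empty
    then show ?case using upper by blast
  next
    case (insert \<beta> F')
    then obtain b where b: "b \<in> A" "\<forall>\<gamma>\<in>F. b \<gamma> \<le> m \<gamma> + \<epsilon>" "\<forall>\<beta>\<in>F'. b \<beta> \<ge> m \<beta> - \<epsilon>"
      by blast
    obtain a where a: "a \<in> A" "a \<beta> \<ge> m \<beta> - \<epsilon>" "\<forall>\<gamma>\<in>F. m \<gamma> < m \<beta> \<longrightarrow> a \<gamma> \<le> m \<gamma> + \<epsilon>"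
      using lower \<open>\<beta> \<in> F\<close> by blast
    txt \<open>Cutting \<open>a\<close> at height \<open>m \<beta>\<close> makes its upper bounds at the coordinates with
      \<open>m \<gamma> \<ge> m \<beta>\<close> automatic, while coordinate \<open>\<beta>\<close> is raised to \<open>m \<beta> - \<epsilon>\<close>.\<close>
    define b' where "b' = (\<lambda>i. max (b i) (min (m \<beta>) (a i)))"
    have "b' \<in> A"
      using \<open>maxmin_convex A\<close> a(1) b(1) unfolding maxmin_convex_def b'_def by blast
    moreover have "b' \<gamma> \<le> m \<gamma> + \<epsilon>" if \<gamma>: "\<gamma> \<in> F" for \<gamma>
    proof -
      have "min (m \<beta>) (a \<gamma>) \<le> m \<gamma> + \<epsilon>"
      proof (cases "m \<gamma> < m \<beta>")
        case True
        then show ?thesis using a(3) \<gamma> by (simp add: min_le_iff_disj)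
      next
        case False
        then show ?thesis using \<open>\<epsilon> \<ge> 0\<close> by simp
      qed
      then show ?thesis
        using b(2) \<gamma> by (simp add: b'_def)
    qed
    moreover have "b' \<beta>' \<ge> m \<beta>' - \<epsilon>" if "\<beta>' \<in> insert \<beta> F'" for \<beta>'
    proof (cases "\<beta>' = \<beta>")
      case True
      then show ?thesis
        using a(2) \<open>\<epsilon> \<ge> 0\<close> by (simp add: b'_def)
    next
      case False
      then show ?thesis
        using b(3) that by (simp add: b'_def le_max_iff_disj)
    qed
    ultimately show ?case by blast
  qed
  then obtain b where "b \<in> A" "\<forall>\<gamma>\<in>F. b \<gamma> \<le> m \<gamma> + \<epsilon>" "\<forall>\<gamma>\<in>F. b \<gamma> \<ge> m \<gamma> - \<epsilon>"
    by blast
  then have "\<forall>\<gamma>\<in>F. \<bar>b \<gamma> - m \<gamma>\<bar> \<le> \<epsilon>"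
    by (auto simp: abs_le_iff)
  with \<open>b \<in> A\<close> show ?thesis by blast
qed

context
  fixes A :: "('i \<Rightarrow> real) set" and \<mu>
  assumes mm: "maxmin_measure A \<mu>"
begin

lemma maxmin_measure_const: "\<mu> (restr A (\<lambda>_. c)) = c"
  using mm unfolding maxmin_measure_def by blast

lemma maxmin_measure_max:
  assumes "continuous_on A f" "continuous_on A g"
  shows "\<mu> (restr A (\<lambda>x. max (f x) (g x))) = max (\<mu> (restr A f)) (\<mu> (restr A g))"
proof -
  have "\<mu> (restr A (\<lambda>x. max (restr A f x) (restr A g x))) = max (\<mu> (restr A f)) (\<mu> (restr A g))"
    using mm restr_in_cfun[OF assms(1)] restr_in_cfun[OF assms(2)]
    unfolding maxmin_measure_def by blast
  moreover have "restr A (\<lambda>x. max (restr A f x) (restr A g x)) = restr A (\<lambda>x. max (f x) (g x))"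
    by (auto simp: rst_def)
  ultimately show ?thesis by simp
qed

lemma maxmin_measure_min:
  assumes "continuous_on A f"
  shows "\<mu> (restr A (\<lambda>x. min c (f x))) = min c (\<mu> (restr A f))"
proof -
  have "\<mu> (restr A (\<lambda>x. min c (restr A f x))) = min c (\<mu> (restr A f))"
    using mm restr_in_cfun[OF assms] unfolding maxmin_measure_def by blast
  moreover have "restr A (\<lambda>x. min c (restr A f x)) = restr A (\<lambda>x. min c (f x))"
    by (auto simp: rst_def)
  ultimately show ?thesis by simp
qed

lemma maxmin_measure_mono:
  assumes "continuous_on A f" "continuous_on A g" "\<And>x. x \<in> A \<Longrightarrow> f x \<le> g x"
  shows "\<mu> (restr A f) \<le> \<mu> (restr A g)"
proof -
  have "restr A (\<lambda>x. max (f x) (g x)) = restr A g"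
    using assms(3) by (auto simp: rst_def max_def)
  then show ?thesis
    using maxmin_measure_max[OF assms(1,2)] by simp
qed

lemma maxmin_measure_Max_insert:
  assumes "finite G" "\<And>g. g \<in> G \<Longrightarrow> continuous_on A (f g)"
  shows "\<mu> (restr A (\<lambda>x. Max (insert c ((\<lambda>g. f g x) ` G))))
    = Max (insert c ((\<lambda>g. \<mu> (restr A (f g))) ` G))"
  using assms
proof (induction G rule: finite_induct)
  case empty
  then show ?case by (simp add: maxmin_measure_const)
next
  case (insert a G)
  have cont: "continuous_on A (\<lambda>x. Max (insert c ((\<lambda>g. f g x) ` G)))"
    using insert by (intro continuous_on_Max_insert) auto
  have "\<mu> (restr A (\<lambda>x. Max (insert c ((\<lambda>g. f g x) ` insert a G))))
      = \<mu> (restr A (\<lambda>x. max (f a x) (Max (insert c ((\<lambda>g. f g x) ` G)))))"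
    using insert.hyps(1) by (simp only: Max_insert_image_insert)
  also have "\<dots> = max (\<mu> (restr A (f a))) (\<mu> (restr A (\<lambda>x. Max (insert c ((\<lambda>g. f g x) ` G)))))"
    using insert.prems cont by (intro maxmin_measure_max) auto
  also have "\<dots> = Max (insert c ((\<lambda>g. \<mu> (restr A (f g))) ` insert a G))"
    using insert by (simp only: Max_insert_image_insert) auto
  finally show ?case .
qed

lemma maxmin_measure_less_if_min_le_max:
  assumes "continuous_on A \<phi>" "continuous_on A \<psi>" "l < r" "\<mu> (restr A \<phi>) < r"
    and "\<And>x. x \<in> A \<Longrightarrow> min r (\<psi> x) \<le> max l (\<phi> x)"
  shows "\<mu> (restr A \<psi>) < r"
proof -
  have "min r (\<mu> (restr A \<psi>)) = \<mu> (restr A (\<lambda>x. min r (\<psi> x)))"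
    using maxmin_measure_min[OF assms(2)] by simp
  also have "\<dots> \<le> \<mu> (restr A (\<lambda>x. max l (\<phi> x)))"
    using assms by (intro maxmin_measure_mono continuous_intros) auto
  also have "\<dots> = max l (\<mu> (restr A \<phi>))"
    using maxmin_measure_max[of "\<lambda>_. l" \<phi>] assms(1) by (simp add: maxmin_measure_const)
  finally show ?thesis
    using assms(3,4) by linarith
qed

lemma maxmin_measure_cutoff:
  assumes "xi A \<mu> \<gamma> < T" "\<epsilon> > 0"
  obtains h where "continuous_on A h" "\<mu> (restr A h) < T"
    "\<And>x. x \<gamma> \<ge> xi A \<mu> \<gamma> + \<epsilon> \<Longrightarrow> h x \<ge> T"
proof -
  define m where "m = xi A \<mu> \<gamma>"
  define r where "r = m + min \<epsilon> (T - m) / 2"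
  define K where "K = (T - m) / (m + \<epsilon> - r)"
  txt \<open>\<open>h\<close> equals \<open>m\<close> for \<open>x \<gamma> \<le> r\<close> and rises linearly to \<open>T\<close>, which it reaches at
    \<open>x \<gamma> = m + \<epsilon>\<close>.\<close>
  define h where "h x = max m (min T (m + (x \<gamma> - r) * K))" for x :: "'i \<Rightarrow> real"
  have r: "m < r" "r < T" "r < m + \<epsilon>" and "K > 0"
    using assms unfolding m_def r_def K_def by (auto simp: min_def field_simps)
  have cont: "continuous_on A h"
    unfolding h_def by (intro continuous_intros)
  have "min r (h x) \<le> max m (x \<gamma>)" for x
  proof (cases "x \<gamma> \<le> r")
    case True
    then have "(x \<gamma> - r) * K \<le> 0"
      using \<open>K > 0\<close> by (simp add: mult_nonpos_nonneg)
    then show ?thesis by (simp add: h_def)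
  qed simp
  then have "\<mu> (restr A h) < r"
    using r \<open>K > 0\<close>
    by (intro maxmin_measure_less_if_min_le_max[OF continuous_on_coordinate cont, of m])
       (auto simp: m_def xi_def)
  moreover have "h x \<ge> T" if "x \<gamma> \<ge> m + \<epsilon>" for x
  proof -
    have "T - m = (m + \<epsilon> - r) * K"
      using r unfolding K_def by simp
    also have "\<dots> \<le> (x \<gamma> - r) * K"
      using that \<open>K > 0\<close> by (intro mult_right_mono) auto
    finally show ?thesis
      unfolding h_def using r by simp
  qed
  ultimately show ?thesis
    using that cont r(2) unfolding m_def by fastforce
qed

lemma witness_of_maxmin_measure_ge:
  assumes "finite G" "\<epsilon> > 0" "continuous_on A \<psi>" "\<mu> (restr A \<psi>) \<ge> T"
    and "\<forall>\<gamma>\<in>G. xi A \<mu> \<gamma> < T"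
  shows "\<exists>a\<in>A. \<psi> a \<ge> T - \<epsilon> \<and> (\<forall>\<gamma>\<in>G. a \<gamma> \<le> xi A \<mu> \<gamma> + \<epsilon>)"
proof (rule ccontr)
  assume no_witness: "\<not> ?thesis"
  have "\<exists>h. continuous_on A h \<and> \<mu> (restr A h) < T \<and> (\<forall>x. x \<gamma> \<ge> xi A \<mu> \<gamma> + \<epsilon> \<longrightarrow> h x \<ge> T)"
    if "\<gamma> \<in> G" for \<gamma>
    using maxmin_measure_cutoff[of \<gamma> T \<epsilon>] assms(2,5) that by blast
  then obtain H where H: "\<And>\<gamma>. \<gamma> \<in> G \<Longrightarrow> continuous_on A (H \<gamma>)"
    "\<And>\<gamma>. \<gamma> \<in> G \<Longrightarrow> \<mu> (restr A (H \<gamma>)) < T"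
    "\<And>\<gamma> x. \<gamma> \<in> G \<Longrightarrow> x \<gamma> \<ge> xi A \<mu> \<gamma> + \<epsilon> \<Longrightarrow> H \<gamma> x \<ge> T"
    by metis
  define g where "g x = Max (insert (T - \<epsilon>) ((\<lambda>\<gamma>. H \<gamma> x) ` G))" for x
  have g_cont: "continuous_on A g"
    unfolding g_def using assms(1) H(1) by (rule continuous_on_Max_insert)
  have "\<mu> (restr A g) = Max (insert (T - \<epsilon>) ((\<lambda>\<gamma>. \<mu> (restr A (H \<gamma>))) ` G))"
    unfolding g_def using assms(1) H(1) by (rule maxmin_measure_Max_insert)
  also have "\<dots> < T"
    using assms(1,2) H(2) by simp
  finally have "\<mu> (restr A g) < T" .
  moreover have "min T (\<psi> x) \<le> g x" if x: "x \<in> A" for x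
  proof -
    have fin: "finite (insert (T - \<epsilon>) ((\<lambda>\<gamma>. H \<gamma> x) ` G))"
      using assms(1) by simp
    consider "\<psi> x < T - \<epsilon>" | \<gamma> where "\<gamma> \<in> G" "x \<gamma> > xi A \<mu> \<gamma> + \<epsilon>"
      using no_witness x by force
    then show ?thesis
    proof cases
      case 1
      have "T - \<epsilon> \<le> g x"
        unfolding g_def using fin by (rule Max_ge) simp
      with 1 show ?thesis by linarith
    next
      case (2 \<gamma>)
      then have "T \<le> H \<gamma> x"
        using H(3) by simp
      also have "H \<gamma> x \<le> g x"
        unfolding g_def using fin 2(1) by (intro Max_ge) auto
      finally show ?thesis by simp
    qed
  qed
  then have "\<mu> (restr A (\<lambda>x. min T (\<psi> x))) \<le> \<mu> (restr A g)"
    using assms(3) g_cont by (intro maxmin_measure_mono continuous_on_min continuous_on_const)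
  then have "T \<le> \<mu> (restr A g)"
    using maxmin_measure_min[OF assms(3), of T] assms(4) by simp
  ultimately show False by simp
qed

lemma xi_coordinatewise_approx:
  assumes "maxmin_convex A" "finite F" "\<epsilon> > 0"
  shows "\<exists>b\<in>A. \<forall>\<gamma>\<in>F. \<bar>b \<gamma> - xi A \<mu> \<gamma>\<bar> \<le> \<epsilon>"
proof (rule maxmin_convex_approx[OF assms(1,2)])
  define T where "T = Max (insert 0 (xi A \<mu> ` F)) + 1"
  have "\<forall>\<gamma>\<in>F. xi A \<mu> \<gamma> < T"
    using assms(2) unfolding T_def by (simp add: add.commute add_strict_increasing)
  then show "\<exists>a\<in>A. \<forall>\<gamma>\<in>F. a \<gamma> \<le> xi A \<mu> \<gamma> + \<epsilon>"
    using witness_of_maxmin_measure_ge[OF assms(2,3) continuous_on_const, of T T]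
    by (simp add: maxmin_measure_const)
next
  fix \<beta>
  have "\<exists>a\<in>A. a \<beta> \<ge> xi A \<mu> \<beta> - \<epsilon> \<and> (\<forall>\<gamma>\<in>{\<gamma>\<in>F. xi A \<mu> \<gamma> < xi A \<mu> \<beta>}. a \<gamma> \<le> xi A \<mu> \<gamma> + \<epsilon>)"
    using assms(2,3) by (intro witness_of_maxmin_measure_ge) (auto simp: xi_def continuous_on_coordinate)
  then show "\<exists>a\<in>A. a \<beta> \<ge> xi A \<mu> \<beta> - \<epsilon> \<and> (\<forall>\<gamma>\<in>F. xi A \<mu> \<gamma> < xi A \<mu> \<beta> \<longrightarrow> a \<gamma> \<le> xi A \<mu> \<gamma> + \<epsilon>)"
    by auto
qed (use assms(3) in simp)

end

theorem mainTheorem19: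
  fixes A :: "('i \<Rightarrow> real) set"
  assumes "compact A" and "maxmin_convex A"
  shows "xi A ` J A \<subseteq> A"
proof
  fix y assume "y \<in> xi A ` J A"
  then obtain \<mu> where "maxmin_measure A \<mu>" and "y = xi A \<mu>"
    by (auto simp: J_def)
  then show "y \<in> A"
    using mem_compact_if_coordinatewise_approx[OF assms(1)]
      xi_coordinatewise_approx[OF _ assms(2)] by (simp add: dist_real_def)
qed

end
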